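(* If $T_{1}$ has a left $A$-colinear inverse, then for all $a,b,c\in A$, $$m\Big((\iota\otimes S)\big((c\otimes 1)\Delta(a)\big)(1\otimes b)\Big)=c\,\varepsilon(a)\,b .$$
   Context: Let $A$ be an associative algebra over a field $k$ (possibly without identity) whose product is non-degenerate, with multiplier algebra $M(A)$, left multipliers $L(A)$, and multiplication map $m$. Let $\Delta: A\to M(A\otimes A)$ be an algebra homomorphism (not necessarily coassociative) such that the Galois maps $T_{1}(a\otimes b)=\Delta(a)(1\otimes b)$ and $T_{2}(a\otimes b)=(a\otimes 1)\Delta(b)$ lie in $A\otimes A$ for all $a,b\in A$. Let $\varepsilon:A\to k$ be linear with $(\varepsilon\otimes\iota)T_{1}(a\otimes b)=ab=(\iota\otimes\varepsilon)T_{2}(a\otimes b)$. Assume $T_{1},T_{2}$ are bijective. Sweedler notation $\Delta(a)=a_{(1)}\otimes a_{(2)}$ is used. "$T_{1}$ has a left $A$-colinear inverse" means $T_{1}^{-1}=(\iota\otimes\varepsilon\otimes\iota)(\iota\otimes T_{1}^{-1})(\Delta\otimes\iota)$. The map $S:A\to L(A)$ is defined by $S(a)b=(\varepsilon\otimes\iota)T_{1}^{-1}(a\otimes b)$. *)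

theory Defs
  imports Complex_Main
begin

text \<open>
The field k is a type 'k::field; the algebra A is a type 'a::ring
(class ring = associative, distributive, no identity required), made into a
k-algebra by a scalar multiplication sc :: 'k => 'a => 'a.

Algebraic tensor product A (x) A: we use the concrete model of A (x) A inside
the algebraic dual of the space of bilinear forms on A x A.  A simple tensor
x (x) y is the evaluation functional phi |-> phi x y (on bilinear phi, and 0
elsewhere, to make the representation canonical); A (x) A is the set TT of
finite sums of simple tensors.  Over a field the canonical map from the
abstract tensor product into this space is injective, so TT is (isomorphic to)
A (x) A.
\<close>

type_synonym ('a,'k) tensor = "('a \<Rightarrow> 'a \<Rightarrow> 'k) \<Rightarrow> 'k"

definition bilin :: "('k::field \<Rightarrow> 'a::ring \<Rightarrow> 'a) \<Rightarrow> ('a \<Rightarrow> 'a \<Rightarrow> 'k) \<Rightarrow> bool" where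
  "bilin sc \<phi> \<longleftrightarrow> (\<forall>y. Vector_Spaces.linear sc (*) (\<lambda>x. \<phi> x y))
                   \<and> (\<forall>x. Vector_Spaces.linear sc (*) (\<phi> x))"

definition tens :: "('k::field \<Rightarrow> 'a::ring \<Rightarrow> 'a) \<Rightarrow> 'a \<Rightarrow> 'a \<Rightarrow> ('a,'k) tensor" where
  "tens sc x y = (\<lambda>\<phi>. if bilin sc \<phi> then \<phi> x y else 0)"

definition tlist :: "('k::field \<Rightarrow> 'a::ring \<Rightarrow> 'a) \<Rightarrow> ('a \<times> 'a) list \<Rightarrow> ('a,'k) tensor" where
  "tlist sc xs = (\<lambda>\<phi>. if bilin sc \<phi> then (\<Sum>(x,y)\<leftarrow>xs. \<phi> x y) else 0)"

definition TT :: "('k::field \<Rightarrow> 'a::ring \<Rightarrow> 'a) \<Rightarrow> ('a,'k) tensor set" where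
  "TT sc = range (tlist sc)"

definition tadd :: "('a,'k::field) tensor \<Rightarrow> ('a,'k) tensor \<Rightarrow> ('a,'k) tensor" where
  "tadd s t = (\<lambda>\<phi>. s \<phi> + t \<phi>)"

definition tscale :: "'k::field \<Rightarrow> ('a,'k) tensor \<Rightarrow> ('a,'k) tensor" where
  "tscale r t = (\<lambda>\<phi>. r * t \<phi>)"

definition tlinear :: "('k::field \<Rightarrow> 'a::ring \<Rightarrow> 'a) \<Rightarrow> (('a,'k) tensor \<Rightarrow> ('a,'k) tensor) \<Rightarrow> bool" where
  "tlinear sc F \<longleftrightarrow> F ` TT sc \<subseteq> TT sc
     \<and> (\<forall>s\<in>TT sc. \<forall>t\<in>TT sc. F (tadd s t) = tadd (F s) (F t))
     \<and> (\<forall>r. \<forall>t\<in>TT sc. F (tscale r t) = tscale r (F t))"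

text \<open>The product of the algebra A (x) A: (x (x) y)(x' (x) y') = x x' (x) y y'.\<close>
definition tmult :: "('k::field \<Rightarrow> 'a::ring \<Rightarrow> 'a) \<Rightarrow> ('a,'k) tensor \<Rightarrow> ('a,'k) tensor \<Rightarrow> ('a,'k) tensor" where
  "tmult sc s t = (\<lambda>\<phi>. if bilin sc \<phi> then s (\<lambda>x y. t (\<lambda>x' y'. \<phi> (x * x') (y * y'))) else 0)"

definition tmap :: "('k::field \<Rightarrow> 'a::ring \<Rightarrow> 'a) \<Rightarrow> ('a \<Rightarrow> 'a) \<Rightarrow> ('a \<Rightarrow> 'a) \<Rightarrow> ('a,'k) tensor \<Rightarrow> ('a,'k) tensor" where
  "tmap sc f g t = (\<lambda>\<phi>. if bilin sc \<phi> then t (\<lambda>x y. \<phi> (f x) (g y)) else 0)"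

text \<open>The linear map A (x) A -> A induced by a bilinear map beta : A x A -> A,
  i.e. x (x) y |-> beta x y (characterised by testing with all linear functionals on A).\<close>
definition tcontract :: "('k::field \<Rightarrow> 'a::ring \<Rightarrow> 'a) \<Rightarrow> ('a \<Rightarrow> 'a \<Rightarrow> 'a) \<Rightarrow> ('a,'k) tensor \<Rightarrow> 'a" where
  "tcontract sc \<beta> t = (THE z. \<forall>l. Vector_Spaces.linear sc (*) l \<longrightarrow> l z = t (\<lambda>x y. l (\<beta> x y)))"

definition mult_map :: "('k::field \<Rightarrow> 'a::ring \<Rightarrow> 'a) \<Rightarrow> ('a,'k) tensor \<Rightarrow> 'a" where
  "mult_map sc t = tcontract sc (\<lambda>x y. x * y) t"

text \<open>eps (x) iota and iota (x) eps : A (x) A -> A (identifying k (x) A and A (x) k with A).\<close>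
definition eps_left :: "('k::field \<Rightarrow> 'a::ring \<Rightarrow> 'a) \<Rightarrow> ('a \<Rightarrow> 'k) \<Rightarrow> ('a,'k) tensor \<Rightarrow> 'a" where
  "eps_left sc \<epsilon> t = tcontract sc (\<lambda>x y. sc (\<epsilon> x) y) t"

definition eps_right :: "('k::field \<Rightarrow> 'a::ring \<Rightarrow> 'a) \<Rightarrow> ('a \<Rightarrow> 'k) \<Rightarrow> ('a,'k) tensor \<Rightarrow> 'a" where
  "eps_right sc \<epsilon> t = tcontract sc (\<lambda>x y. sc (\<epsilon> y) x) t"

text \<open>The map S : A -> L(A), written as S a b = S(a) b = (eps (x) iota) T1^{-1}(a (x) b).\<close>
definition antipode :: "('k::field \<Rightarrow> 'a::ring \<Rightarrow> 'a) \<Rightarrow> ('a \<Rightarrow> 'k)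
    \<Rightarrow> (('a,'k) tensor \<Rightarrow> ('a,'k) tensor) \<Rightarrow> 'a \<Rightarrow> 'a \<Rightarrow> 'a" where
  "antipode sc \<epsilon> T1 a b = eps_left sc \<epsilon> (the_inv_into (TT sc) T1 (tens sc a b))"

text \<open>The coproduct Delta : A -> M(A (x) A)
  is given by the left and right actions of the multipliers Delta(a) on A (x) A:
  DL a t = Delta(a) t and DR a t = t Delta(a).\<close>
definition galois_setting ::
  "('k::field \<Rightarrow> 'a::ring \<Rightarrow> 'a) \<Rightarrow> ('a \<Rightarrow> ('a,'k) tensor \<Rightarrow> ('a,'k) tensor)
   \<Rightarrow> ('a \<Rightarrow> ('a,'k) tensor \<Rightarrow> ('a,'k) tensor) \<Rightarrow> ('a \<Rightarrow> 'k)
   \<Rightarrow> (('a,'k) tensor \<Rightarrow> ('a,'k) tensor) \<Rightarrow> (('a,'k) tensor \<Rightarrow> ('a,'k) tensor) \<Rightarrow> bool" where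
  "galois_setting sc DL DR \<epsilon> T1 T2 \<longleftrightarrow>
     \<comment> \<open>A is an associative k-algebra\<close>
     vector_space sc
   \<and> (\<forall>r x y. sc r (x * y) = sc r x * y \<and> sc r (x * y) = x * sc r y)
     \<comment> \<open>non-degenerate product\<close>
   \<and> (\<forall>a::'a. (\<forall>b. a * b = 0) \<longrightarrow> a = 0)
   \<and> (\<forall>a::'a. (\<forall>b. b * a = 0) \<longrightarrow> a = 0)
     \<comment> \<open>each Delta(a) is a multiplier of A (x) A\<close>
   \<and> (\<forall>a. DL a ` TT sc \<subseteq> TT sc \<and> DR a ` TT sc \<subseteq> TT sc)
   \<and> (\<forall>a. \<forall>s\<in>TT sc. \<forall>t\<in>TT sc. tmult sc (DR a s) t = tmult sc s (DL a t))
     \<comment> \<open>Delta is linear\<close>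
   \<and> (\<forall>a b. \<forall>t\<in>TT sc. DL (a + b) t = tadd (DL a t) (DL b t) \<and> DR (a + b) t = tadd (DR a t) (DR b t))
   \<and> (\<forall>r a. \<forall>t\<in>TT sc. DL (sc r a) t = tscale r (DL a t) \<and> DR (sc r a) t = tscale r (DR a t))
     \<comment> \<open>Delta is multiplicative\<close>
   \<and> (\<forall>a b. \<forall>t\<in>TT sc. DL (a * b) t = DL a (DL b t) \<and> DR (a * b) t = DR b (DR a t))
     \<comment> \<open>Galois maps: T1 and T2 are the linear maps on A (x) A with
        T1(a (x) b) = Delta(a)(1 (x) b) and T2(a (x) b) = (a (x) 1)Delta(b), lying in A (x) A\<close>
   \<and> tlinear sc T1 \<and> tlinear sc T2
   \<and> (\<forall>a b x y. tmult sc (T1 (tens sc a b)) (tens sc x y) = DL a (tens sc x (b * y)))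
   \<and> (\<forall>a b x y. tmult sc (tens sc x y) (T2 (tens sc a b)) = DR b (tens sc (x * a) y))
     \<comment> \<open>counit-type property of epsilon\<close>
   \<and> Vector_Spaces.linear sc (*) \<epsilon>
   \<and> (\<forall>a b. eps_left sc \<epsilon> (T1 (tens sc a b)) = a * b)
   \<and> (\<forall>a b. eps_right sc \<epsilon> (T2 (tens sc a b)) = a * b)
     \<comment> \<open>T1, T2 bijective\<close>
   \<and> bij_betw T1 (TT sc) (TT sc) \<and> bij_betw T2 (TT sc) (TT sc)"

text \<open>T1 has a left A-colinear inverse:
  T1^{-1} = (iota (x) eps (x) iota)(iota (x) T1^{-1})(Delta (x) iota),
  read (as usual) after covering the first leg of Delta(a) by c (x) 1 on the left:
  (c (x) 1) T1^{-1}(a (x) b) = (iota (x) eps (x) iota)(iota (x) T1^{-1})((c (x) 1)Delta(a) (x) b).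
  Writing (c (x) 1)Delta(a) = T2(c (x) a) = sum p_i (x) q_i, the right-hand side is
  sum p_i (x) (eps (x) iota)T1^{-1}(q_i (x) b).\<close>
definition left_colinear_inverse ::
  "('k::field \<Rightarrow> 'a::ring \<Rightarrow> 'a) \<Rightarrow> ('a \<Rightarrow> 'k)
   \<Rightarrow> (('a,'k) tensor \<Rightarrow> ('a,'k) tensor) \<Rightarrow> (('a,'k) tensor \<Rightarrow> ('a,'k) tensor) \<Rightarrow> bool" where
  "left_colinear_inverse sc \<epsilon> T1 T2 \<longleftrightarrow>
     (\<forall>a b c. tmap sc (\<lambda>x. c * x) id (the_inv_into (TT sc) T1 (tens sc a b))
        = tmap sc id (\<lambda>q. eps_left sc \<epsilon> (the_inv_into (TT sc) T1 (tens sc q b))) (T2 (tens sc c a)))"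

end

theory Submission
  imports Defs
begin

text \<open>
  Left colinearity of \<open>T\<^sub>1\<^sup>-\<^sup>1\<close> turns the left-hand side into
  \<open>m((c \<otimes> 1) T\<^sub>1\<^sup>-\<^sup>1(a \<otimes> b)) = c m(T\<^sub>1\<^sup>-\<^sup>1(a \<otimes> b))\<close>.
  Since \<open>(\<epsilon> \<otimes> \<iota>) T\<^sub>1(x \<otimes> y) = x y\<close> on simple tensors, linearity gives
  \<open>(\<epsilon> \<otimes> \<iota>) \<circ> T\<^sub>1 = m\<close> on all of \<open>A \<otimes> A\<close>; at \<open>T\<^sub>1\<^sup>-\<^sup>1(a \<otimes> b)\<close> this reads
  \<open>m(T\<^sub>1\<^sup>-\<^sup>1(a \<otimes> b)) = (\<epsilon> \<otimes> \<iota>)(a \<otimes> b) = \<epsilon>(a) b\<close>.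
\<close>

lemma vector_space_field_mult: "vector_space ((*) :: 'k::field \<Rightarrow> 'k \<Rightarrow> 'k)"
  by unfold_locales (auto simp: algebra_simps)

lemma linear_functionals_separate_points:
  fixes sc :: "'k::field \<Rightarrow> 'a::ring \<Rightarrow> 'a"
  assumes vs: "vector_space sc"
    and eq: "\<forall>l. Vector_Spaces.linear sc (*) l \<longrightarrow> l z = l z'"
  shows "z = z'"
proof (rule ccontr)
  assume ne: "z \<noteq> z'"
  interpret vp: vector_space_pair sc "(*) :: 'k \<Rightarrow> 'k \<Rightarrow> 'k"
    using vs vector_space_field_mult by (simp add: vector_space_pair_def)
  have "vp.vs1.independent {z - z'}"
    using ne by (intro vp.vs1.independent_insertI) (auto simp: vp.vs1.independent_empty)
  then obtain g where g: "Vector_Spaces.linear sc (*) g" "g (z - z') = 1"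
    using vp.linear_independent_extend[of "{z - z'}" "\<lambda>_. 1"] by auto
  moreover have "g (z - z') = g z - g z'" using g(1) by (rule vp.linear_diff)
  moreover have "g z = g z'" using eq g(1) by blast
  ultimately show False by simp
qed

lemma linear_sum_list:
  assumes "Vector_Spaces.linear s1 s2 f"
  shows "f (\<Sum>x\<leftarrow>xs. g x) = (\<Sum>x\<leftarrow>xs. f (g x))"
proof -
  have add: "f (x + y) = f x + f y" for x y
    using assms by (simp add: Vector_Spaces.linear_iff)
  then have "f 0 = 0" by (metis add_cancel_right_right)
  with add show ?thesis by (induction xs) auto
qed

lemma tens_eq_tlist: "tens sc x y = tlist sc [(x, y)]"
  by (auto intro!: ext simp: tlist_def tens_def)

lemma tlist_in_TT: "tlist sc xs \<in> TT sc"
  by (simp add: TT_def)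

lemma tens_in_TT: "tens sc x y \<in> TT sc"
  by (simp add: tens_eq_tlist tlist_in_TT)

lemma tadd_tlist: "tadd (tlist sc us) (tlist sc vs) = tlist sc (us @ vs)"
  by (auto intro!: ext simp: tlist_def tadd_def)

lemma tlist_Cons: "tlist sc ((x, y) # xs) = tadd (tens sc x y) (tlist sc xs)"
  by (simp add: tens_eq_tlist tadd_tlist)

lemma tlinear_tlist_Nil:
  assumes "tlinear sc F"
  shows "F (tlist sc []) = tlist sc []"
proof -
  have zero: "tlist sc [] = tscale 0 (tlist sc [])"
    by (auto intro!: ext simp: tlist_def tscale_def)
  then have "F (tlist sc []) = tscale 0 (F (tlist sc []))"
    using assms tlist_in_TT unfolding tlinear_def by metis
  then show ?thesis
    by (subst zero) (simp add: tscale_def)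
qed

lemma tmap_tlist:
  assumes f: "Vector_Spaces.linear sc sc f" and g: "Vector_Spaces.linear sc sc g"
  shows "tmap sc f g (tlist sc xs) = tlist sc (map (\<lambda>(x, y). (f x, g y)) xs)"
proof -
  have "bilin sc (\<lambda>x y. \<phi> (f x) (g y))" if "bilin sc \<phi>" for \<phi>
    using that f g unfolding bilin_def Vector_Spaces.linear_iff by auto
  then show ?thesis
    unfolding tmap_def tlist_def by (auto intro!: ext simp: comp_def case_prod_unfold)
qed

text \<open>The element \<open>tcontract sc \<beta> t\<close> is pinned down by linear functionals, which separate points.\<close>

lemma tcontract_tlist:
  fixes sc :: "'k::field \<Rightarrow> 'a::ring \<Rightarrow> 'a"
  assumes vs: "vector_space sc"
    and bilin: "\<forall>l. Vector_Spaces.linear sc (*) l \<longrightarrow> bilin sc (\<lambda>x y. l (\<beta> x y))"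
  shows "tcontract sc \<beta> (tlist sc xs) = (\<Sum>(x, y)\<leftarrow>xs. \<beta> x y)"
proof -
  have eval: "l (\<Sum>(x, y)\<leftarrow>xs. \<beta> x y) = tlist sc xs (\<lambda>x y. l (\<beta> x y))"
    if l: "Vector_Spaces.linear sc (*) l" for l
    using bilin l by (simp add: tlist_def linear_sum_list[OF l] case_prod_unfold)
  show ?thesis unfolding tcontract_def
  proof (rule the_equality)
    fix z assume z: "\<forall>l. Vector_Spaces.linear sc (*) l \<longrightarrow> l z = tlist sc xs (\<lambda>x y. l (\<beta> x y))"
    show "z = (\<Sum>(x, y)\<leftarrow>xs. \<beta> x y)"
      using z eval by (intro linear_functionals_separate_points[OF vs] allI impI) simp
  qed (use eval in blast)
qed

lemma mult_map_tlist:
  fixes sc :: "'k::field \<Rightarrow> 'a::ring \<Rightarrow> 'a"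
  assumes vs: "vector_space sc"
    and scale_mult: "\<forall>r x y. sc r (x * y) = sc r x * y \<and> sc r (x * y) = x * sc r y"
  shows "mult_map sc (tlist sc xs) = (\<Sum>(x, y)\<leftarrow>xs. x * y)"
  unfolding mult_map_def
proof (rule tcontract_tlist[OF vs], intro allI impI)
  fix l assume "Vector_Spaces.linear sc (*) l"
  with scale_mult show "bilin sc (\<lambda>x y. l (x * y))"
    unfolding bilin_def Vector_Spaces.linear_iff
    by (auto simp: distrib_left distrib_right) metis+
qed

lemma eps_left_tlist:
  fixes sc :: "'k::field \<Rightarrow> 'a::ring \<Rightarrow> 'a"
  assumes vs: "vector_space sc" and \<epsilon>: "Vector_Spaces.linear sc (*) \<epsilon>"
  shows "eps_left sc \<epsilon> (tlist sc xs) = (\<Sum>(x, y)\<leftarrow>xs. sc (\<epsilon> x) y)"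
  unfolding eps_left_def
proof (rule tcontract_tlist[OF vs], intro allI impI)
  interpret vector_space sc by (rule vs)
  fix l assume "Vector_Spaces.linear sc (*) l"
  with \<epsilon> show "bilin sc (\<lambda>x y. l (sc (\<epsilon> x) y))"
    unfolding bilin_def Vector_Spaces.linear_iff
    by (auto simp: scale_left_distrib scale_right_distrib algebra_simps)
qed

lemma eps_left_tens:
  fixes sc :: "'k::field \<Rightarrow> 'a::ring \<Rightarrow> 'a"
  assumes "vector_space sc" and "Vector_Spaces.linear sc (*) \<epsilon>"
  shows "eps_left sc \<epsilon> (tens sc a b) = sc (\<epsilon> a) b"
  using eps_left_tlist[OF assms, of "[(a, b)]"] by (simp add: tens_eq_tlist)

lemma eps_left_tadd:
  fixes sc :: "'k::field \<Rightarrow> 'a::ring \<Rightarrow> 'a"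
  assumes "vector_space sc" and "Vector_Spaces.linear sc (*) \<epsilon>"
    and "s \<in> TT sc" and "t \<in> TT sc"
  shows "eps_left sc \<epsilon> (tadd s t) = eps_left sc \<epsilon> s + eps_left sc \<epsilon> t"
proof -
  obtain us ws where "s = tlist sc us" and "t = tlist sc ws"
    using assms(3,4) unfolding TT_def by blast
  then show ?thesis by (simp add: tadd_tlist eps_left_tlist[OF assms(1,2)])
qed

lemma eps_left_comp_eq_mult_map:
  fixes sc :: "'k::field \<Rightarrow> 'a::ring \<Rightarrow> 'a"
  assumes vs: "vector_space sc"
    and scale_mult: "\<forall>r x y. sc r (x * y) = sc r x * y \<and> sc r (x * y) = x * sc r y"
    and \<epsilon>: "Vector_Spaces.linear sc (*) \<epsilon>"
    and T: "tlinear sc T"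
    and eps_T: "\<forall>x y. eps_left sc \<epsilon> (T (tens sc x y)) = x * y"
    and t: "t \<in> TT sc"
  shows "eps_left sc \<epsilon> (T t) = mult_map sc t"
proof -
  have T_TT: "T s \<in> TT sc" if "s \<in> TT sc" for s
    using T that unfolding tlinear_def by blast
  have "eps_left sc \<epsilon> (T (tlist sc xs)) = (\<Sum>(x, y)\<leftarrow>xs. x * y)" for xs
  proof (induction xs)
    case Nil
    show ?case by (simp add: tlinear_tlist_Nil[OF T] eps_left_tlist[OF vs \<epsilon>])
  next
    case (Cons p xs)
    obtain x y where p: "p = (x, y)" by fastforce
    have "T (tlist sc (p # xs)) = tadd (T (tens sc x y)) (T (tlist sc xs))"
      using T tens_in_TT tlist_in_TT unfolding p tlist_Cons tlinear_def by blast
    with Cons eps_T p show ?case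
      by (simp add: eps_left_tadd[OF vs \<epsilon>] T_TT tens_in_TT tlist_in_TT)
  qed
  with t show ?thesis
    unfolding TT_def by (auto simp: mult_map_tlist[OF vs scale_mult])
qed

lemma mult_map_tmap_left_mult:
  fixes sc :: "'k::field \<Rightarrow> 'a::ring \<Rightarrow> 'a"
  assumes vs: "vector_space sc"
    and scale_mult: "\<forall>r x y. sc r (x * y) = sc r x * y \<and> sc r (x * y) = x * sc r y"
    and t: "t \<in> TT sc"
  shows "mult_map sc (tmap sc (\<lambda>x. c * x) id t) = c * mult_map sc t"
proof -
  obtain xs where xs: "t = tlist sc xs" using t unfolding TT_def by blast
  have "Vector_Spaces.linear sc sc (\<lambda>x. c * x)"
    unfolding Vector_Spaces.linear_iff
  proof (intro conjI allI)
    fix r x show "c * sc r x = sc r (c * x)" using scale_mult by metis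
  qed (use vs in \<open>auto simp: distrib_left\<close>)
  moreover have "Vector_Spaces.linear sc sc id"
    using vs by (simp add: Vector_Spaces.linear_iff)
  moreover have "(\<Sum>(x, y)\<leftarrow>xs. c * x * y) = c * (\<Sum>(x, y)\<leftarrow>xs. x * y)"
    by (induction xs) (auto simp: distrib_left mult.assoc)
  ultimately show ?thesis
    by (simp add: xs tmap_tlist mult_map_tlist[OF vs scale_mult] comp_def case_prod_unfold)
qed

theorem lemma3p1:
  fixes sc :: "'k::field \<Rightarrow> 'a::ring \<Rightarrow> 'a"
    and DL DR :: "'a \<Rightarrow> ('a,'k) tensor \<Rightarrow> ('a,'k) tensor"
    and \<epsilon> :: "'a \<Rightarrow> 'k"
    and T1 T2 :: "('a,'k) tensor \<Rightarrow> ('a,'k) tensor"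
  assumes "galois_setting sc DL DR \<epsilon> T1 T2"
    and "left_colinear_inverse sc \<epsilon> T1 T2"
  shows "\<forall>a b c. mult_map sc (tmap sc id (\<lambda>q. antipode sc \<epsilon> T1 q b) (T2 (tens sc c a)))
                = sc (\<epsilon> a) (c * b)"
proof (intro allI)
  fix a b c
  from assms(1) have vs: "vector_space sc"
    and scale_mult: "\<forall>r x y. sc r (x * y) = sc r x * y \<and> sc r (x * y) = x * sc r y"
    and \<epsilon>: "Vector_Spaces.linear sc (*) \<epsilon>" and T1: "tlinear sc T1"
    and eps_T1: "\<forall>x y. eps_left sc \<epsilon> (T1 (tens sc x y)) = x * y"
    and bij: "bij_betw T1 (TT sc) (TT sc)"
    unfolding galois_setting_def by argo+
  define X where "X = the_inv_into (TT sc) T1 (tens sc a b)"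
  have X: "X \<in> TT sc" "T1 X = tens sc a b"
    unfolding X_def using bij_betw_apply[OF bij_betw_the_inv_into[OF bij]]
      f_the_inv_into_f_bij_betw[OF bij] tens_in_TT by blast+
  have "mult_map sc (tmap sc id (\<lambda>q. antipode sc \<epsilon> T1 q b) (T2 (tens sc c a)))
      = mult_map sc (tmap sc (\<lambda>x. c * x) id X)"
    using assms(2) by (simp add: left_colinear_inverse_def antipode_def X_def)
  also have "\<dots> = c * eps_left sc \<epsilon> (T1 X)"
    by (simp add: mult_map_tmap_left_mult[OF vs scale_mult X(1)]
        eps_left_comp_eq_mult_map[OF vs scale_mult \<epsilon> T1 eps_T1 X(1)])
  also have "\<dots> = sc (\<epsilon> a) (c * b)"
    using scale_mult by (metis X(2) eps_left_tens[OF vs \<epsilon>])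
  finally show "mult_map sc (tmap sc id (\<lambda>q. antipode sc \<epsilon> T1 q b) (T2 (tens sc c a)))
      = sc (\<epsilon> a) (c * b)" .
qed

end
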